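(* Assume Dickson's conjecture. Then the set \[ \left\{ \frac{\varphi(p+1)}{\varphi(p)} \,:\, p \text{ and } p+2 \text{ are both prime} \right\} \] is dense in $\left[0,\tfrac{1}{3}\right]$.
   Context: $\varphi$ denotes Euler's totient function. Dickson's conjecture is the following assertion: if $f_1,\dots,f_k \in \mathbb{Z}[t]$ are linear polynomials with positive leading coefficients and the product $f=f_1f_2\cdots f_k$ does not vanish identically modulo any prime (i.e., for every prime $q$ there is an integer $t$ with $q \nmid f(t)$), then there are infinitely many positive integers $t$ for which $f_1(t),\dots,f_k(t)$ are simultaneously prime. *)

theory Defs
  imports "HOL-Analysis.Analysis" "HOL-Number_Theory.Number_Theory"
begin

text \<open>Dickson's conjecture. A linear polynomial f(t) = a*t + b in Z[t] is encoded as the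
pair (a, b). A finite family f_1,...,f_k is a list of such pairs.\<close>

definition dickson_conjecture :: bool where
  "dickson_conjecture \<longleftrightarrow>
     (\<forall>fs :: (int \<times> int) list.
        (\<forall>(a, b) \<in> set fs. a > 0) \<longrightarrow>
        (\<forall>q :: int. prime q \<longrightarrow>
           (\<exists>t :: int. \<not> q dvd (\<Prod>(a, b) \<leftarrow> fs. a * t + b))) \<longrightarrow>
        infinite {t :: int. t > 0 \<and> (\<forall>(a, b) \<in> set fs. prime (a * t + b))})"

end

(*
  If 6 divides M, the forms t, Mt - 1, Mt + 1 have no fixed prime divisor, so Dickson's
  conjecture yields infinitely many primes s for which p = Ms - 1 and p + 2 are twin primes.
  For s > M one has phi(p + 1) / phi(p) = phi(M) (s - 1) / (Ms - 2), which tends to phi(M) / M.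
  It remains to see that the numbers phi(M) / M with 6 | M are dense in [0, 1/3]. Starting
  from M = 6 and multiplying in the primes q > K one at a time lowers phi(M) / M = 1/3 by steps
  smaller than 1/K, and it eventually falls below any bound: every m <= X factors over the
  primes up to X, so H_X <= prod_(q <= X) 1 / (1 - 1/q), and as the harmonic series diverges
  the product of the factors 1 - 1/q over the primes q > K tends to 0.
*)
theory Submission
  imports Defs "HOL-Real_Asymp.Real_Asymp"
begin

definition smooth_numbers :: "nat set \<Rightarrow> nat \<Rightarrow> nat set" where
  "smooth_numbers P X = {m \<in> {1..X}. prime_factors m \<subseteq> P}"

lemma finite_smooth_numbers [simp]: "finite (smooth_numbers P X)"
  by (simp add: smooth_numbers_def)

lemma smooth_numbers_empty: "smooth_numbers {} X \<subseteq> {1}"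
  by (auto simp: smooth_numbers_def prime_factorization_empty_iff)

lemma smooth_numbers_insert:
  assumes "prime q"
  shows "smooth_numbers (insert q P) X \<subseteq> (\<lambda>(k, m). q ^ k * m) ` ({..X} \<times> smooth_numbers P X)"
proof
  fix m assume m: "m \<in> smooth_numbers (insert q P) X"
  then have "m > 0" "m \<le> X" and m_factors: "prime_factors m \<subseteq> insert q P"
    by (auto simp: smooth_numbers_def)
  define k where "k = multiplicity q m"
  obtain m' where m': "m = q ^ k * m'" "\<not> q dvd m'"
    using multiplicity_decompose'[of m q] \<open>m > 0\<close> assms unfolding k_def
    by (metis gr_implies_not0 not_prime_unit)
  have "m' > 0" using m' \<open>m > 0\<close> by (auto intro: gr0I)
  have "k < 2 ^ k" by (rule less_exp)
  also have "\<dots> \<le> q ^ k" using prime_ge_2_nat[OF assms] by (simp add: power_mono)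
  also have "\<dots> \<le> m" using m' \<open>m > 0\<close> by (simp add: dvd_imp_le)
  finally have "k \<le> X" using \<open>m \<le> X\<close> by simp
  have "m' \<le> m" using m' \<open>m > 0\<close> by (simp add: dvd_imp_le)
  have "prime_factors m' \<subseteq> prime_factors m" using m' \<open>m > 0\<close> by (intro dvd_prime_factors) auto
  then have "prime_factors m' \<subseteq> P" using m_factors m'(2) by auto
  then have "m' \<in> smooth_numbers P X"
    using \<open>m' > 0\<close> \<open>m' \<le> m\<close> \<open>m \<le> X\<close> by (simp add: smooth_numbers_def)
  then show "m \<in> (\<lambda>(k, m). q ^ k * m) ` ({..X} \<times> smooth_numbers P X)"
    using \<open>k \<le> X\<close> m'(1) by force
qed

lemma sum_power_le_inverse_one_minus:
  fixes x :: real
  assumes "0 \<le> x" "x < 1"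
  shows "(\<Sum>k\<le>n. x ^ k) \<le> 1 / (1 - x)"
proof -
  have "(\<Sum>k\<le>n. x ^ k) = (1 - x ^ Suc n) / (1 - x)"
    using assms sum_gp_strict[of x "Suc n"] by (simp add: lessThan_Suc_atMost)
  also have "\<dots> \<le> 1 / (1 - x)"
    using assms by (intro divide_right_mono) auto
  finally show ?thesis .
qed

lemma sum_inverse_smooth_numbers_le:
  assumes "finite P" "\<And>q. q \<in> P \<Longrightarrow> prime q"
  shows "(\<Sum>m\<in>smooth_numbers P X. 1 / real m) \<le> (\<Prod>q\<in>P. 1 / (1 - 1 / real q))"
  using assms
proof (induction P rule: finite_induct)
  case empty
  have "(\<Sum>m\<in>smooth_numbers {} X. 1 / real m) \<le> (\<Sum>m\<in>{1}. 1 / real m)"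
    using smooth_numbers_empty by (intro sum_mono2) auto
  then show ?case by simp
next
  case (insert q P)
  have "prime q" using insert.prems by simp
  then have q: "0 \<le> 1 / real q" "1 / real q < 1"
    using prime_gt_1_nat[of q] by auto
  let ?S = "smooth_numbers P X"
  have "(\<Sum>m\<in>smooth_numbers (insert q P) X. 1 / real m)
      \<le> (\<Sum>m\<in>(\<lambda>(k, m). q ^ k * m) ` ({..X} \<times> ?S). 1 / real m)"
    using smooth_numbers_insert[OF \<open>prime q\<close>] by (intro sum_mono2) auto
  also have "\<dots> \<le> (\<Sum>(k, m)\<in>{..X} \<times> ?S. 1 / real (q ^ k * m))"
    by (rule sum_image_le[THEN order_trans]) (auto simp: case_prod_unfold)
  also have "\<dots> = (\<Sum>k\<le>X. (1 / real q) ^ k) * (\<Sum>m\<in>?S. 1 / real m)"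
    by (simp add: sum_product sum.cartesian_product power_one_over case_prod_unfold)
  also have "\<dots> \<le> 1 / (1 - 1 / real q) * (\<Prod>q\<in>P. 1 / (1 - 1 / real q))"
    using insert q by (intro mult_mono sum_power_le_inverse_one_minus sum_nonneg) auto
  also have "\<dots> = (\<Prod>q\<in>insert q P. 1 / (1 - 1 / real q))"
    using insert by simp
  finally show ?case .
qed

lemma harm_mult_prod_primes_le_1:
  assumes "finite P" "\<And>q. q \<in> P \<Longrightarrow> prime q" "\<And>q. prime q \<Longrightarrow> q \<le> X \<Longrightarrow> q \<in> P"
  shows "harm X * (\<Prod>q\<in>P. 1 - 1 / real q) \<le> 1"
proof -
  have factor_pos: "0 < 1 - 1 / real q" if "q \<in> P" for q
    using prime_gt_1_nat[OF assms(2)[OF that]] by simp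
  have "prime_factors m \<subseteq> P" if "m \<in> {1..X}" for m
  proof
    fix q assume "q \<in> prime_factors m"
    then have "prime q" "q \<le> m"
      using that by (auto simp: in_prime_factors_iff intro: dvd_imp_le)
    then show "q \<in> P" using that assms(3) by simp
  qed
  then have "smooth_numbers P X = {1..X}"
    unfolding smooth_numbers_def by blast
  then have "harm X = (\<Sum>m\<in>smooth_numbers P X. 1 / real m)"
    by (simp add: harm_def inverse_eq_divide)
  also have "\<dots> \<le> 1 / (\<Prod>q\<in>P. 1 - 1 / real q)"
    using sum_inverse_smooth_numbers_le[OF assms(1,2)] by (simp add: prod_dividef)
  finally show ?thesis
    using prod_pos[of P, OF factor_pos] by (simp add: field_simps)
qed

definition primes_between :: "nat \<Rightarrow> nat \<Rightarrow> nat set" where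
  "primes_between a b = {q. prime q \<and> a < q \<and> q \<le> b}"

lemma finite_primes_between [simp]: "finite (primes_between a b)"
  by (simp add: primes_between_def)

lemma primes_between_prime: "q \<in> primes_between a b \<Longrightarrow> prime q"
  by (simp add: primes_between_def)

lemma primes_between_empty: "b \<le> a \<Longrightarrow> primes_between a b = {}"
  by (auto simp: primes_between_def)

lemma primes_between_Suc:
  "primes_between a (Suc b) =
     (if prime (Suc b) \<and> a < Suc b then insert (Suc b) (primes_between a b) else primes_between a b)"
  by (auto simp: primes_between_def le_Suc_eq)

lemma primes_between_split:
  "a \<le> b \<Longrightarrow> b \<le> c \<Longrightarrow> primes_between a c = primes_between a b \<union> primes_between b c"
  by (auto simp: primes_between_def)

lemma prod_primes_between_tendsto_0:
  "(\<lambda>n. \<Prod>q\<in>primes_between K n. 1 - 1 / real q) \<longlonglongrightarrow> 0"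
proof -
  have factor_pos: "0 < 1 - 1 / real q" if "q \<in> primes_between a b" for q a b
    using prime_gt_1_nat[OF primes_between_prime[OF that]] by simp
  define c where "c = (\<Prod>q\<in>primes_between 0 K. 1 - 1 / real q)"
  have "c > 0" unfolding c_def using factor_pos by (rule prod_pos)
  have "(\<Prod>q\<in>primes_between K n. 1 - 1 / real q) \<le> inverse (c * harm n)" if "n \<ge> K" "n \<ge> 1" for n
  proof -
    have split: "primes_between 0 n = primes_between 0 K \<union> primes_between K n"
      using that by (intro primes_between_split) auto
    have "(\<Prod>q\<in>primes_between 0 n. 1 - 1 / real q) = c * (\<Prod>q\<in>primes_between K n. 1 - 1 / real q)"
      unfolding split c_def by (rule prod.union_disjoint) (auto simp: primes_between_def)
    moreover have "harm n * (\<Prod>q\<in>primes_between 0 n. 1 - 1 / real q) \<le> 1"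
      by (intro harm_mult_prod_primes_le_1) (auto simp: primes_between_def prime_gt_0_nat)
    moreover have "harm n > (0 :: real)" using that by (intro harm_pos) auto
    ultimately show ?thesis using \<open>c > 0\<close> by (simp add: field_simps)
  qed
  then have upper: "\<forall>\<^sub>F n in sequentially.
      (\<Prod>q\<in>primes_between K n. 1 - 1 / real q) \<le> inverse (c * harm n)"
    by (intro eventually_sequentiallyI[of "max K 1"]) auto
  have lower: "\<forall>\<^sub>F n in sequentially. 0 \<le> (\<Prod>q\<in>primes_between K n. 1 - 1 / real q)"
    by (intro always_eventually allI prod_nonneg less_imp_le factor_pos)
  have "(\<lambda>n. inverse (c * harm n)) \<longlonglongrightarrow> 0"
    using \<open>c > 0\<close> by (intro tendsto_inverse_0_at_top filterlim_tendsto_pos_mult_at_top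
        [OF tendsto_const _ harm_at_top])
  with lower upper tendsto_const show ?thesis by (rule tendsto_sandwich)
qed

lemma totient_prod_primes:
  assumes "finite A" "\<And>q. q \<in> A \<Longrightarrow> prime q"
  shows "real (totient (\<Prod>A)) = real (\<Prod>A) * (\<Prod>q\<in>A. 1 - 1 / real q)"
proof -
  have "prime_factors (\<Prod>A) = A"
    using assms assms(2)[of 0] by (subst prime_factors_prod) (auto simp: prime_prime_factors)
  then show ?thesis by (simp add: totient_formula2)
qed

lemma small_decrements_approach:
  fixes v :: "nat \<Rightarrow> real"
  assumes "x \<le> v 0" "v n < x + \<epsilon>" "\<And>k. v k - v (Suc k) < \<epsilon>"
  shows "\<exists>k. \<bar>v k - x\<bar> < \<epsilon>"
proof -
  define k where "k = (LEAST k. v k < x + \<epsilon>)"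
  have "v k < x + \<epsilon>"
    unfolding k_def by (rule LeastI[of _ n]) (rule assms(2))
  moreover have "x - \<epsilon> < v k"
  proof (cases k)
    case 0
    then show ?thesis using assms(1) \<open>v k < x + \<epsilon>\<close> by simp
  next
    case (Suc j)
    then have "x + \<epsilon> \<le> v j"
      using not_less_Least[of j "\<lambda>k. v k < x + \<epsilon>"] unfolding k_def by simp
    then show ?thesis using assms(3)[of j] Suc \<open>v k < x + \<epsilon>\<close> by simp
  qed
  ultimately show ?thesis by (intro exI[of _ k]) simp
qed

lemma closure_totient_ratios_multiples_of_6:
  "{0..1/3} \<subseteq> closure {real (totient M) / real M | M. M > 0 \<and> 6 dvd M}"
proof
  fix x :: real assume x: "x \<in> {0..1/3}"
  show "x \<in> closure {real (totient M) / real M | M. M > 0 \<and> 6 dvd M}"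
    unfolding closure_approachable
  proof (intro allI impI)
    fix \<epsilon> :: real assume "\<epsilon> > 0"
    obtain K :: nat where "K \<ge> 3" "1 / real K < \<epsilon>"
    proof -
      obtain n :: nat where "1 / \<epsilon> < real n"
        using reals_Archimedean2 by blast
      then have "1 / real (n + 3) < \<epsilon>"
        using \<open>\<epsilon> > 0\<close> by (simp add: field_simps)
      then show thesis by (intro that[of "n + 3"]) simp_all
    qed
    define M where "M n = \<Prod>(insert 2 (insert 3 (primes_between K n)))" for n
    define v where "v n = (1/3 :: real) * (\<Prod>q\<in>primes_between K n. 1 - 1 / real q)" for n
    have small_primes: "2 \<notin> primes_between K n" "3 \<notin> primes_between K n" for n
      using \<open>K \<ge> 3\<close> by (auto simp: primes_between_def)
    have M: "M n = 6 * \<Prod>(primes_between K n)" "M n > 0" for n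
      using small_primes[of n] by (auto simp: M_def intro: prod_pos prime_gt_0_nat primes_between_prime)
    have ratio: "real (totient (M n)) / real (M n) = v n" for n
    proof -
      have "real (totient (M n)) = real (M n) * v n"
        unfolding M_def v_def using small_primes[of n]
        by (subst totient_prod_primes) (auto dest: primes_between_prime)
      then show ?thesis using M(2)[of n] by simp
    qed
    have factor_bounds: "0 \<le> 1 - 1 / real q" "1 - 1 / real q \<le> 1" if "q \<in> primes_between K n" for q n
      using prime_gt_1_nat[OF primes_between_prime[OF that]] by simp_all
    have v_bounds: "0 \<le> v n" "v n \<le> 1/3" for n
      unfolding v_def using factor_bounds by (auto intro!: prod_nonneg prod_le_1)
    have "v 0 = 1/3"
      by (simp add: v_def primes_between_empty)
    then have "x \<le> v 0" using x by simp
    have "v \<longlonglongrightarrow> 0"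
      unfolding v_def by (intro tendsto_mult_right_zero prod_primes_between_tendsto_0)
    then have "\<forall>\<^sub>F n in sequentially. v n < \<epsilon>"
      using \<open>\<epsilon> > 0\<close> by (rule order_tendstoD(2))
    then obtain n where "v n < \<epsilon>"
      by (metis eventually_sequentially order_refl)
    then have "v n < x + \<epsilon>" using x by simp
    have "v k - v (Suc k) < \<epsilon>" for k
    proof (cases "prime (Suc k) \<and> K < Suc k")
      case True
      moreover have "Suc k \<notin> primes_between K k"
        by (simp add: primes_between_def)
      ultimately have "v (Suc k) = v k * (1 - 1 / real (Suc k))"
        by (simp add: v_def primes_between_Suc mult_ac)
      then have "v k - v (Suc k) = v k / real (Suc k)"
        by (simp add: field_simps)
      also have "\<dots> \<le> 1 / real K"
        using True v_bounds[of k] \<open>K \<ge> 3\<close> by (intro frac_le) auto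
      finally show ?thesis using \<open>1 / real K < \<epsilon>\<close> by simp
    next
      case False
      then have "primes_between K (Suc k) = primes_between K k"
        by (simp only: primes_between_Suc if_False)
      then show ?thesis using \<open>\<epsilon> > 0\<close> by (simp add: v_def)
    qed
    then obtain k where "\<bar>v k - x\<bar> < \<epsilon>"
      using small_decrements_approach[OF \<open>x \<le> v 0\<close> \<open>v n < x + \<epsilon>\<close>] by blast
    moreover have "v k \<in> {real (totient M) / real M | M. M > 0 \<and> 6 dvd M}"
      unfolding ratio[of k, symmetric] using M[of k] by (intro CollectI exI[of _ "M k"]) simp
    ultimately show "\<exists>y\<in>{real (totient M) / real M | M. M > 0 \<and> 6 dvd M}. dist y x < \<epsilon>"
      by (auto simp: dist_real_def)
  qed
qed

lemma dickson_triple_admissible: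
  fixes M q :: int
  assumes "6 dvd M" "prime q"
  shows "\<exists>t. \<not> q dvd (\<Prod>(a, b)\<leftarrow>[(1, 0), (M, -1), (M, 1)]. a * t + b)"
proof (rule ccontr)
  assume "\<not> ?thesis"
  then have "q dvd (\<Prod>(a, b)\<leftarrow>[(1, 0), (M, -1), (M, 1)]. a * 1 + b)"
    and "q dvd (\<Prod>(a, b)\<leftarrow>[(1, 0), (M, -1), (M, 1)]. a * 2 + b)"
    by blast+
  then have f1: "q dvd M\<^sup>2 - 1" and f2: "q dvd 8 * M\<^sup>2 - 2"
    by (simp_all add: algebra_simps power2_eq_square)
  have "q dvd (8 * M\<^sup>2 - 2) - 8 * (M\<^sup>2 - 1)"
    by (rule dvd_diff[OF f2 dvd_mult[OF f1]])
  then have "q dvd 6" by simp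
  then have "q dvd M"
    using assms(1) by (rule dvd_trans)
  then have "q dvd M\<^sup>2"
    by (simp add: power2_eq_square)
  then have "q dvd M\<^sup>2 - (M\<^sup>2 - 1)"
    using f1 by (rule dvd_diff)
  then have "q dvd 1" by simp
  then show False using assms(2) not_prime_unit by blast
qed

lemma dickson_prime_triples:
  fixes M :: nat
  assumes "dickson_conjecture" "M > 0" "6 dvd M"
  shows "infinite {s. prime s \<and> prime (M * s - 1) \<and> prime (M * s + 1)}"
proof -
  define fs :: "(int \<times> int) list" where "fs = [(1, 0), (int M, -1), (int M, 1)]"
  let ?T = "{t :: int. t > 0 \<and> (\<forall>(a, b) \<in> set fs. prime (a * t + b))}"
  have "6 dvd int M" using assms(3) by presburger
  then have "\<forall>q :: int. prime q \<longrightarrow> (\<exists>t. \<not> q dvd (\<Prod>(a, b) \<leftarrow> fs. a * t + b))"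
    unfolding fs_def using dickson_triple_admissible by blast
  moreover have "\<forall>(a, b) \<in> set fs. a > 0"
    using assms(2) by (auto simp: fs_def)
  ultimately have "infinite ?T"
    using assms(1) unfolding dickson_conjecture_def by blast
  moreover have "inj_on nat ?T" by (auto intro: inj_onI)
  moreover have "nat ` ?T \<subseteq> {s. prime s \<and> prime (M * s - 1) \<and> prime (M * s + 1)}"
  proof clarify
    fix t :: int assume t: "t > 0" "\<forall>(a, b) \<in> set fs. prime (a * t + b)"
    have "int (M * nat t - 1) = int M * t - 1" "int (M * nat t + 1) = int M * t + 1"
      using t(1) assms(2) by (simp_all add: Suc_le_eq)
    then show "prime (nat t) \<and> prime (M * nat t - 1) \<and> prime (M * nat t + 1)"
      using t by (simp add: fs_def add.commute flip: prime_nat_int_transfer)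
  qed
  ultimately show ?thesis
    using finite_imageD infinite_super by blast
qed

lemma totient_ratio_prime_multiple:
  assumes "prime s" "prime (M * s - 1)" "M < s"
  shows "real (totient (M * s)) / real (totient (M * s - 1))
           = real (totient M) * (real s - 1) / (real M * real s - 2)"
proof -
  have "M * s - 1 \<ge> 2" using prime_ge_2_nat[OF assms(2)] .
  then have "M > 0" by (cases M) simp_all
  then have "\<not> s dvd M"
    using assms(3) by (auto dest: dvd_imp_le)
  then have "coprime M s"
    using assms(1) prime_imp_coprime coprime_commute by blast
  then have "totient (M * s) = totient M * (s - 1)"
    using assms(1) by (simp add: totient_mult_coprime totient_prime)
  moreover have "totient (M * s - 1) = M * s - 2"
    using assms(2) by (simp add: totient_prime)
  ultimately show ?thesis
    using \<open>M * s - 1 \<ge> 2\<close> prime_ge_1_nat[OF assms(1)] by simp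
qed

lemma totient_ratio_in_closure_twin_ratios:
  assumes "dickson_conjecture" "M > 0" "6 dvd M"
  shows "real (totient M) / real M
           \<in> closure {real (totient (p + 1)) / real (totient p) | p :: nat. prime p \<and> prime (p + 2)}"
    (is "_ \<in> closure ?S")
proof -
  define g where "g s = real (totient M) * (real s - 1) / (real M * real s - 2)" for s :: nat
  have lim: "g \<longlonglongrightarrow> real (totient M) / real M"
    using assms(2) unfolding g_def by real_asymp (simp add: divide_inverse)
  have g_twin_ratio: "g s \<in> ?S" if "prime s" "prime (M * s - 1)" "prime (M * s + 1)" "M < s" for s
  proof -
    have "M * s - 1 + 1 = M * s" "M * s - 1 + 2 = M * s + 1"
      using prime_gt_0_nat[OF that(2)] by simp_all
    then show ?thesis
      using that totient_ratio_prime_multiple[of s M] unfolding g_def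
      by (intro CollectI exI[of _ "M * s - 1"]) simp
  qed
  show ?thesis
    unfolding closure_approachable
  proof (intro allI impI)
    fix \<epsilon> :: real assume "\<epsilon> > 0"
    then obtain N where N: "\<And>s. s \<ge> N \<Longrightarrow> dist (g s) (real (totient M) / real M) < \<epsilon>"
      using lim unfolding lim_sequentially by blast
    obtain s where "s \<ge> max N (Suc M)" "s \<in> {s. prime s \<and> prime (M * s - 1) \<and> prime (M * s + 1)}"
      using dickson_prime_triples[OF assms] unfolding infinite_nat_iff_unbounded_le by blast
    then show "\<exists>y\<in>?S. dist y (real (totient M) / real M) < \<epsilon>"
      using g_twin_ratio N by (intro bexI[of _ "g s"]) auto
  qed
qed

theorem theorem3:
  assumes "dickson_conjecture"
  shows "{0..1/3} \<subseteq> closure {real (totient (p + 1)) / real (totient p) | p :: nat.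
                                 prime p \<and> prime (p + 2)}"
proof -
  let ?S = "{real (totient (p + 1)) / real (totient p) | p :: nat. prime p \<and> prime (p + 2)}"
  have "{real (totient M) / real M | M. M > 0 \<and> 6 dvd M} \<subseteq> closure ?S"
    using totient_ratio_in_closure_twin_ratios[OF assms] by blast
  then have "closure {real (totient M) / real M | M. M > 0 \<and> 6 dvd M} \<subseteq> closure ?S"
    by (rule closure_minimal) simp
  with closure_totient_ratios_multiples_of_6 show ?thesis
    by (rule order_trans)
qed

end
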